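(* Let $\Pi=(\mathcal{S},\mathcal{R})$ be a CRN protocol and let $S$ be a strongly connected component of its configuration digraph $D^{\Pi}$. Then $D^{\Pi}$ admits a weakly fair infinite path all of whose nodes lie in $S$ if and only if no reaction in $\mathcal{R}$ escapes from $S$.
   Context: A CRN protocol is a pair $\Pi=(\mathcal{S},\mathcal{R})$ with $\mathcal{S}$ a finite set of species and $\mathcal{R}\subset\mathbb{N}^{\mathcal{S}}\times\mathbb{N}^{\mathcal{S}}$ a finite set of reactions $\alpha=(\mathbf{r},\mathbf{p})$ ($\mathbf{r}$ = reactants, $\mathbf{p}$ = products, $\mathbb{N}=\{0,1,2,\dots\}$), where every reaction has $\|\mathbf{r}\|_1\in\{1,2\}$ and $\|\mathbf{r}\|_1\le\|\mathbf{p}\|_1$; for every $\mathbf{r}$ with $1\le\|\mathbf{r}\|_1\le 2$ the set $\mathcal{R}(\mathbf{r})$ of reactions with reactant vector $\mathbf{r}$ is nonempty; reactions with $\mathbf{r}=\mathbf{p}$ are void, and if $(\mathbf{r},\mathbf{r})\in\mathcal{R}$ then $\mathcal{R}(\mathbf{r})=\{(\mathbf{r},\mathbf{r})\}$. A configuration is $\mathbf{c}\in\mathbb{N}^{\mathcal{S}}$ with $\|\mathbf{c}\|_1\ge 1$. A reaction $(\mathbf{r},\mathbf{p})$ is applicable to $\mathbf{c}$ if $\mathbf{r}\le\mathbf{c}$ componentwise; $\operatorname{app}(\mathbf{c})$ is the set of applicable reactions, and then $\alpha(\mathbf{c})=\mathbf{c}-\mathbf{r}+\mathbf{p}$. The protocol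 respects finite density: the set of configurations reachable from any configuration is finite, with molecular counts $O(\|\mathbf{c}\|_1)$. The configuration digraph $D^{\Pi}$ has all configurations as nodes and, for each configuration $\mathbf{c}$ and each $\alpha\in\operatorname{app}(\mathbf{c})$, an $\alpha$-labeled edge from $\mathbf{c}$ to $\alpha(\mathbf{c})$. Infinite paths in $D^{\Pi}$ correspond to executions $\langle\mathbf{c}^t,\alpha^t\rangle_{t\ge0}$ ($\alpha^t\in\operatorname{app}(\mathbf{c}^t)$, $\mathbf{c}^{t+1}=\alpha^t(\mathbf{c}^t)$). An execution (path) is weakly fair if for every $t\ge0$ and every $\alpha\in\operatorname{app}(\mathbf{c}^t)$ there is $t'\ge t$ with $\alpha^{t'}=\alpha$ or $\alpha\notin\operatorname{app}(\mathbf{c}^{t'})$. A reaction $\alpha$ escapes from a component $S$ if for every $\mathbf{c}\in S$, $\alpha\in\operatorname{app}(\mathbf{c})$ and $\alpha(\mathbf{c})\notin S$. *)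

theory Defs
  imports Main
begin

text \<open>Species form a finite type 's; vectors in N^S are functions 's => nat.
A reaction is a pair (r, p) of reactant and product vectors.\<close>

type_synonym 's vec = "'s \<Rightarrow> nat"
type_synonym 's reaction = "'s vec \<times> 's vec"

definition norm1 :: "('s::finite) vec \<Rightarrow> nat" where
  "norm1 c = (\<Sum>s\<in>UNIV. c s)"

definition is_config :: "('s::finite) vec \<Rightarrow> bool" where
  "is_config c \<longleftrightarrow> norm1 c \<ge> 1"

definition reactions_with :: "'s reaction set \<Rightarrow> 's vec \<Rightarrow> 's reaction set" where
  "reactions_with R r = {\<alpha> \<in> R. fst \<alpha> = r}"

definition applicable :: "'s reaction \<Rightarrow> 's vec \<Rightarrow> bool" where
  "applicable \<alpha> c \<longleftrightarrow> fst \<alpha> \<le> c"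

definition app :: "'s reaction set \<Rightarrow> 's vec \<Rightarrow> 's reaction set" where
  "app R c = {\<alpha> \<in> R. applicable \<alpha> c}"

definition apply_rxn :: "'s reaction \<Rightarrow> 's vec \<Rightarrow> 's vec" where
  "apply_rxn \<alpha> c = (\<lambda>s. c s - fst \<alpha> s + snd \<alpha> s)"

definition edge :: "('s::finite) reaction set \<Rightarrow> 's vec \<Rightarrow> 's vec \<Rightarrow> bool" where
  "edge R c c' \<longleftrightarrow> is_config c \<and> (\<exists>\<alpha>\<in>app R c. c' = apply_rxn \<alpha> c)"

definition reach :: "('s::finite) reaction set \<Rightarrow> 's vec \<Rightarrow> 's vec \<Rightarrow> bool" where
  "reach R = (edge R)\<^sup>*\<^sup>*"

definition crn_protocol :: "('s::finite) reaction set \<Rightarrow> bool" where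
  "crn_protocol R \<longleftrightarrow>
     finite R \<and>
     (\<forall>(r, p)\<in>R. norm1 r \<in> {1, 2} \<and> norm1 r \<le> norm1 p) \<and>
     (\<forall>r. 1 \<le> norm1 r \<and> norm1 r \<le> 2 \<longrightarrow> reactions_with R r \<noteq> {}) \<and>
     (\<forall>r. (r, r) \<in> R \<longrightarrow> reactions_with R r = {(r, r)}) \<and>
     \<comment> \<open>finite density\<close>
     (\<forall>c. is_config c \<longrightarrow> finite {c'. reach R c c'}) \<and>
     (\<exists>K::nat. \<forall>c c'. is_config c \<longrightarrow> reach R c c' \<longrightarrow> norm1 c' \<le> K * norm1 c)"

definition is_scc :: "('s::finite) reaction set \<Rightarrow> 's vec set \<Rightarrow> bool" where
  "is_scc R S \<longleftrightarrow>
     S \<noteq> {} \<and> (\<forall>c\<in>S. is_config c) \<and>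
     (\<forall>c\<in>S. \<forall>d\<in>S. reach R c d) \<and>
     (\<forall>c\<in>S. \<forall>d. is_config d \<and> reach R c d \<and> reach R d c \<longrightarrow> d \<in> S)"

definition is_execution :: "('s::finite) reaction set \<Rightarrow> (nat \<Rightarrow> 's vec) \<Rightarrow> (nat \<Rightarrow> 's reaction) \<Rightarrow> bool" where
  "is_execution R c a \<longleftrightarrow>
     (\<forall>t. is_config (c t) \<and> a t \<in> app R (c t) \<and> c (Suc t) = apply_rxn (a t) (c t))"

definition weakly_fair :: "('s::finite) reaction set \<Rightarrow> (nat \<Rightarrow> 's vec) \<Rightarrow> (nat \<Rightarrow> 's reaction) \<Rightarrow> bool" where
  "weakly_fair R c a \<longleftrightarrow>
     (\<forall>t. \<forall>\<alpha>\<in>app R (c t). \<exists>t'\<ge>t. a t' = \<alpha> \<or> \<alpha> \<notin> app R (c t'))"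

definition escapes :: "('s::finite) reaction set \<Rightarrow> 's reaction \<Rightarrow> 's vec set \<Rightarrow> bool" where
  "escapes R \<alpha> S \<longleftrightarrow> (\<forall>c\<in>S. \<alpha> \<in> app R c \<and> apply_rxn \<alpha> c \<notin> S)"

end

theory Submission
  imports Defs
begin

text \<open>If some reaction escapes from \<open>S\<close>, it is enabled everywhere in \<open>S\<close>, so weak fairness
forces it to fire and the path leaves \<open>S\<close>. Conversely, if no reaction escapes, then for every
reaction \<open>\<beta>\<close> some configuration of \<open>S\<close> can fire \<open>\<beta>\<close> without leaving \<open>S\<close> (or has \<open>\<beta>\<close> disabled).
Serving the reactions in round robin, we walk inside \<open>S\<close> along shortest paths to such a
configuration of the current reaction and then serve it there; strong connectivity of \<open>S\<close>
makes these walks possible.\<close>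

text \<open>Only meaningful if \<open>G\<close> is reachable from \<open>x\<close>; otherwise \<open>LEAST\<close> yields an unspecified value.\<close>

definition rel_dist :: "('a \<Rightarrow> 'a \<Rightarrow> bool) \<Rightarrow> 'a set \<Rightarrow> 'a \<Rightarrow> nat" where
  "rel_dist r G x = (LEAST n. \<exists>y\<in>G. (r ^^ n) x y)"

lemma rel_dist_decreasing_step:
  assumes "r\<^sup>*\<^sup>* x y" "y \<in> G" "x \<notin> G"
  shows "\<exists>x'. r x x' \<and> rel_dist r G x' < rel_dist r G x"
proof -
  have "\<exists>n. \<exists>y\<in>G. (r ^^ n) x y"
    using assms(1,2) by (blast dest: rtranclp_imp_relpowp)
  then have "\<exists>y\<in>G. (r ^^ rel_dist r G x) x y"
    unfolding rel_dist_def by (rule LeastI_ex)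
  then obtain z where z: "z \<in> G" "(r ^^ rel_dist r G x) x z" by blast
  then obtain m where m: "rel_dist r G x = Suc m"
    using \<open>x \<notin> G\<close> by (cases "rel_dist r G x") auto
  then obtain x' where "r x x'" "(r ^^ m) x' z"
    using z(2) relpowp_Suc_D2 by metis
  moreover have "rel_dist r G x' \<le> m"
    unfolding rel_dist_def using calculation(2) z(1) by (blast intro: Least_le)
  ultimately show ?thesis using m by auto
qed

lemma rtranclp_restrict:
  assumes "r\<^sup>*\<^sup>* x y" and "\<And>z. r\<^sup>*\<^sup>* x z \<Longrightarrow> r\<^sup>*\<^sup>* z y \<Longrightarrow> z \<in> A"
  shows "(\<lambda>a b. r a b \<and> a \<in> A \<and> b \<in> A)\<^sup>*\<^sup>* x y"
  using assms
proof (induction rule: converse_rtranclp_induct)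
  case (step x z)
  have "x \<in> A" "z \<in> A"
    using step.prems step.hyps by (auto intro: converse_rtranclp_into_rtranclp)
  moreover have "(\<lambda>a b. r a b \<and> a \<in> A \<and> b \<in> A)\<^sup>*\<^sup>* z y"
    using step.IH step.prems step.hyps(1) by (meson converse_rtranclp_into_rtranclp)
  ultimately show ?case
    using step.hyps(1) by (simp add: converse_rtranclp_into_rtranclp)
qed simp

lemma round_robin_infinitely_often:
  assumes "xs \<noteq> []" "\<And>k. \<exists>t\<ge>k. P (xs ! (k mod length xs)) t" "x \<in> set xs"
  shows "\<exists>t'\<ge>t. P x t'"
proof -
  obtain j where j: "j < length xs" "xs ! j = x"
    using \<open>x \<in> set xs\<close> by (auto simp: in_set_conv_nth)
  define k where "k = t * length xs + j"
  have "t \<le> k"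
    using \<open>xs \<noteq> []\<close> by (cases xs) (auto simp: k_def)
  moreover obtain t' where "t' \<ge> k" "P (xs ! (k mod length xs)) t'"
    using assms(2) by blast
  ultimately show ?thesis
    using j by (intro exI[of _ t']) (simp add: k_def)
qed

text \<open>The run advances to the next task exactly when the current one is served; since every
other step decreases the rank of the current task, this happens after finitely many steps.\<close>

locale ranked_progress =
  fixes S :: "'a set" and step :: "'a \<Rightarrow> 'l \<Rightarrow> 'a \<Rightarrow> bool"
    and serves :: "'b \<Rightarrow> 'a \<Rightarrow> 'l \<Rightarrow> bool" and task :: "nat \<Rightarrow> 'b"
    and rank :: "'b \<Rightarrow> 'a \<Rightarrow> nat" and start :: 'a
  assumes start_in: "start \<in> S"
    and progress: "c \<in> S \<Longrightarrow> \<exists>l c'. step c l c' \<and> c' \<in> S \<and>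
      (serves (task k) c l \<or> rank (task k) c' < rank (task k) c)"
begin

definition good_move :: "nat \<Rightarrow> 'a \<Rightarrow> 'l \<times> 'a \<Rightarrow> bool" where
  "good_move k c m \<longleftrightarrow> step c (fst m) (snd m) \<and> snd m \<in> S \<and>
     (serves (task k) c (fst m) \<or> rank (task k) (snd m) < rank (task k) c)"

definition move :: "nat \<Rightarrow> 'a \<Rightarrow> 'l \<times> 'a" where
  "move k c = (SOME m. good_move k c m)"

lemma good_move_move:
  assumes "c \<in> S"
  shows "good_move k c (move k c)"
proof -
  obtain l c' where "good_move k c (l, c')"
    using progress[OF assms, of k] by (auto simp: good_move_def)
  then show ?thesis unfolding move_def by (rule someI)
qed

definition schedule :: "'a \<times> nat \<Rightarrow> 'a \<times> nat" where
  "schedule s = (let (c, k) = s; m = move k c in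
     (snd m, if serves (task k) c (fst m) then Suc k else k))"

definition conf :: "nat \<Rightarrow> 'a" where "conf t = fst ((schedule ^^ t) (start, 0))"
definition counter :: "nat \<Rightarrow> nat" where "counter t = snd ((schedule ^^ t) (start, 0))"
definition label :: "nat \<Rightarrow> 'l" where "label t = fst (move (counter t) (conf t))"

lemma conf_0 [simp]: "conf 0 = start" and counter_0 [simp]: "counter 0 = 0"
  by (simp_all add: conf_def counter_def)

lemma conf_Suc: "conf (Suc t) = snd (move (counter t) (conf t))"
  and counter_Suc: "counter (Suc t) =
    (if serves (task (counter t)) (conf t) (label t) then Suc (counter t) else counter t)"
  by (simp_all add: conf_def counter_def label_def schedule_def case_prod_beta Let_def)

lemma conf_in: "conf t \<in> S"
proof (induction t)
  case (Suc t)
  then show ?case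
    using good_move_move[OF Suc, of "counter t"] by (simp add: conf_Suc good_move_def)
qed (simp add: start_in)

lemma good_move_at: "good_move (counter t) (conf t) (label t, conf (Suc t))"
  using good_move_move[OF conf_in] by (simp add: label_def conf_Suc)

lemma counter_le: "counter t \<le> t"
  by (induction t) (auto simp: counter_Suc)

lemma current_task_served:
  "\<exists>t'\<ge>t. counter t' = counter t \<and> serves (task (counter t)) (conf t') (label t')"
proof (induction "rank (task (counter t)) (conf t)" arbitrary: t rule: less_induct)
  case less
  show ?case
  proof (cases "serves (task (counter t)) (conf t) (label t)")
    case True
    then show ?thesis by blast
  next
    case False
    then have same: "counter (Suc t) = counter t"
      by (simp add: counter_Suc)
    have "rank (task (counter t)) (conf (Suc t)) < rank (task (counter t)) (conf t)"
      using good_move_at[of t] False by (simp add: good_move_def)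
    then obtain t' where "Suc t \<le> t'" "counter t' = counter t"
        "serves (task (counter t)) (conf t') (label t')"
      using less[of "Suc t"] unfolding same by blast
    then show ?thesis by (intro exI[of _ t']) simp
  qed
qed

lemma every_task_served: "\<exists>t. counter t = k \<and> serves (task k) (conf t) (label t)"
proof (induction k)
  case 0
  show ?case using current_task_served[of 0] by auto
next
  case (Suc k)
  then obtain t where "counter t = k" "serves (task k) (conf t) (label t)" by blast
  then have "counter (Suc t) = Suc k" by (simp add: counter_Suc)
  then show ?case using current_task_served[of "Suc t"] by auto
qed

lemma serving_run_exists:
  "\<exists>c a. (\<forall>t. c t \<in> S \<and> step (c t) (a t) (c (Suc t))) \<and>
     (\<forall>k. \<exists>t\<ge>k. serves (task k) (c t) (a t))"
proof -
  have "step (conf t) (label t) (conf (Suc t))" for t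
    using good_move_at[of t] by (simp add: good_move_def)
  moreover have "\<exists>t\<ge>k. serves (task k) (conf t) (label t)" for k
    using every_task_served[of k] counter_le by blast
  ultimately show ?thesis using conf_in by blast
qed

end

lemma app_nonempty:
  assumes "crn_protocol R" "is_config c"
  shows "app R c \<noteq> {}"
proof -
  have "norm1 c \<noteq> 0" using \<open>is_config c\<close> by (simp add: is_config_def)
  then obtain s where s: "c s \<noteq> 0" by (auto simp: norm1_def)
  define r :: "'a vec" where "r = (\<lambda>x. if x = s then 1 else 0)"
  have "norm1 r = 1" by (simp add: norm1_def r_def)
  then have "reactions_with R r \<noteq> {}"
    using \<open>crn_protocol R\<close> by (simp add: crn_protocol_def)
  then obtain \<alpha> where "\<alpha> \<in> R" "fst \<alpha> = r" by (auto simp: reactions_with_def)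
  moreover have "r \<le> c" using s by (auto simp: r_def le_fun_def)
  ultimately have "\<alpha> \<in> app R c" by (simp add: app_def applicable_def)
  then show ?thesis by blast
qed

lemma scc_convex:
  assumes "is_scc R S" "c \<in> S" "d \<in> S" "reach R c x" "reach R x d"
  shows "x \<in> S"
proof (cases "x = d")
  case False
  then obtain z where "edge R x z"
    using \<open>reach R x d\<close> by (auto simp: reach_def elim: converse_rtranclpE)
  then have "is_config x" by (simp add: edge_def)
  moreover have "reach R d c"
    using assms(1-3) unfolding is_scc_def by blast
  then have "reach R x c"
    using \<open>reach R x d\<close> unfolding reach_def by (meson rtranclp_trans)
  ultimately show ?thesis
    using assms(1,2,4) unfolding is_scc_def by blast
qed (use assms in simp)

definition edge_in :: "('s::finite) reaction set \<Rightarrow> 's vec set \<Rightarrow> 's vec \<Rightarrow> 's vec \<Rightarrow> bool" where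
  "edge_in R S = (\<lambda>c d. edge R c d \<and> c \<in> S \<and> d \<in> S)"

lemma scc_path_within:
  assumes scc: "is_scc R S" and "c \<in> S" "d \<in> S"
  shows "(edge_in R S)\<^sup>*\<^sup>* c d"
  unfolding edge_in_def
proof (rule rtranclp_restrict)
  show "(edge R)\<^sup>*\<^sup>* c d"
    using assms unfolding is_scc_def reach_def by blast
  show "x \<in> S" if "(edge R)\<^sup>*\<^sup>* c x" "(edge R)\<^sup>*\<^sup>* x d" for x
    using scc_convex[OF scc \<open>c \<in> S\<close> \<open>d \<in> S\<close>] that by (simp add: reach_def)
qed

definition nonescape_configs :: "('s::finite) reaction set \<Rightarrow> 's vec set \<Rightarrow> 's reaction \<Rightarrow> 's vec set" where
  "nonescape_configs R S \<beta> = {d \<in> S. \<beta> \<in> app R d \<longrightarrow> apply_rxn \<beta> d \<in> S}"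

lemma nonescape_configs_nonempty: "\<not> escapes R \<beta> S \<Longrightarrow> nonescape_configs R S \<beta> \<noteq> {}"
  by (auto simp: escapes_def nonescape_configs_def)

lemma scc_step_within:
  assumes crn: "crn_protocol R" and scc: "is_scc R S" and no_escape: "\<not> (\<exists>\<alpha>\<in>R. escapes R \<alpha> S)"
    and "c \<in> S"
  shows "\<exists>\<alpha>\<in>app R c. apply_rxn \<alpha> c \<in> S"
proof -
  have "is_config c" using scc \<open>c \<in> S\<close> by (simp add: is_scc_def)
  then obtain \<alpha> where \<alpha>: "\<alpha> \<in> app R c" using app_nonempty[OF crn] by blast
  then have "\<not> escapes R \<alpha> S" using no_escape by (simp add: app_def)
  then obtain d where d: "d \<in> nonescape_configs R S \<alpha>"
    using nonescape_configs_nonempty by blast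
  show ?thesis
  proof (cases "c = d")
    case True
    then show ?thesis using \<alpha> d by (auto simp: nonescape_configs_def)
  next
    case False
    moreover have "(edge_in R S)\<^sup>*\<^sup>* c d"
      using scc_path_within[OF scc \<open>c \<in> S\<close>] d by (simp add: nonescape_configs_def)
    ultimately obtain c' where "edge_in R S c c'" by (auto elim: converse_rtranclpE)
    then show ?thesis by (auto simp: edge_in_def edge_def)
  qed
qed

lemma scc_progress:
  assumes crn: "crn_protocol R" and scc: "is_scc R S" and no_escape: "\<not> (\<exists>\<alpha>\<in>R. escapes R \<alpha> S)"
    and "c \<in> S" "\<beta> \<in> R"
  defines "dist \<equiv> rel_dist (edge_in R S) (nonescape_configs R S \<beta>)"
  shows "\<exists>\<alpha> c'. (\<alpha> \<in> app R c \<and> c' = apply_rxn \<alpha> c) \<and> c' \<in> S \<and>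
    ((\<alpha> = \<beta> \<or> \<beta> \<notin> app R c) \<or> dist c' < dist c)"
proof (cases "c \<in> nonescape_configs R S \<beta>")
  case True
  show ?thesis
  proof (cases "\<beta> \<in> app R c")
    case True
    then show ?thesis
      using \<open>c \<in> nonescape_configs R S \<beta>\<close>
      by (intro exI[of _ \<beta>] exI[of _ "apply_rxn \<beta> c"]) (simp add: nonescape_configs_def)
  next
    case False
    then show ?thesis using scc_step_within[OF crn scc no_escape \<open>c \<in> S\<close>] by blast
  qed
next
  case False
  obtain d where d: "d \<in> nonescape_configs R S \<beta>"
    using no_escape \<open>\<beta> \<in> R\<close> nonescape_configs_nonempty by blast
  then have "(edge_in R S)\<^sup>*\<^sup>* c d"
    using scc_path_within[OF scc \<open>c \<in> S\<close>] by (simp add: nonescape_configs_def)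
  then obtain c' where "edge_in R S c c'" "dist c' < dist c"
    using rel_dist_decreasing_step d False unfolding dist_def by metis
  then show ?thesis by (auto simp: edge_in_def edge_def)
qed

lemma weakly_fair_round_robin:
  assumes "xs \<noteq> []" "set xs = R"
    and "\<And>k. \<exists>t\<ge>k. a t = xs ! (k mod length xs) \<or> xs ! (k mod length xs) \<notin> app R (c t)"
  shows "weakly_fair R c a"
  unfolding weakly_fair_def
proof (intro allI ballI)
  fix t \<alpha>
  assume "\<alpha> \<in> app R (c t)"
  then have "\<alpha> \<in> set xs" using assms(2) by (simp add: app_def)
  then show "\<exists>t'\<ge>t. a t' = \<alpha> \<or> \<alpha> \<notin> app R (c t')"
    using round_robin_infinitely_often[where P = "\<lambda>\<beta> t. a t = \<beta> \<or> \<beta> \<notin> app R (c t)",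
        OF assms(1,3)]
    by blast
qed

lemma fair_execution_within_scc:
  assumes crn: "crn_protocol R" and scc: "is_scc R S" and no_escape: "\<not> (\<exists>\<alpha>\<in>R. escapes R \<alpha> S)"
  shows "\<exists>c a. is_execution R c a \<and> weakly_fair R c a \<and> (\<forall>t. c t \<in> S)"
proof -
  obtain c0 where "c0 \<in> S" using scc by (auto simp: is_scc_def)
  have "finite R" using crn by (simp add: crn_protocol_def)
  then obtain xs where xs: "set xs = R" using finite_list by blast
  moreover have "xs \<noteq> []"
    using xs scc_step_within[OF crn scc no_escape \<open>c0 \<in> S\<close>] by (auto simp: app_def)
  ultimately have task_in: "xs ! (k mod length xs) \<in> R" for k by auto
  interpret ranked_progress S "\<lambda>c \<alpha> c'. \<alpha> \<in> app R c \<and> c' = apply_rxn \<alpha> c"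
    "\<lambda>\<beta> c \<alpha>. \<alpha> = \<beta> \<or> \<beta> \<notin> app R c" "\<lambda>k. xs ! (k mod length xs)"
    "\<lambda>\<beta>. rel_dist (edge_in R S) (nonescape_configs R S \<beta>)" c0
    using \<open>c0 \<in> S\<close> scc_progress[OF crn scc no_escape _ task_in] by unfold_locales blast+
  obtain c a where run: "\<forall>t. c t \<in> S \<and> a t \<in> app R (c t) \<and> c (Suc t) = apply_rxn (a t) (c t)"
    and served: "\<forall>k. \<exists>t\<ge>k. a t = xs ! (k mod length xs) \<or> xs ! (k mod length xs) \<notin> app R (c t)"
    using serving_run_exists by blast
  have "is_execution R c a"
    using run scc by (auto simp: is_execution_def is_scc_def)
  moreover have "weakly_fair R c a"
    using weakly_fair_round_robin[OF \<open>xs \<noteq> []\<close> xs] served by blast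
  ultimately show ?thesis using run by blast
qed

lemma escape_leaves_fair_execution:
  assumes "is_execution R c a" "weakly_fair R c a" "\<forall>t. c t \<in> S"
  shows "\<not> escapes R \<alpha> S"
proof
  assume "escapes R \<alpha> S"
  then have "\<alpha> \<in> app R (c t)" "apply_rxn \<alpha> (c t) \<notin> S" for t
    using assms(3) by (auto simp: escapes_def)
  then obtain t where "a t = \<alpha>"
    using \<open>weakly_fair R c a\<close> unfolding weakly_fair_def by blast
  then have "c (Suc t) \<notin> S"
    using \<open>is_execution R c a\<close> \<open>apply_rxn \<alpha> (c t) \<notin> S\<close> by (simp add: is_execution_def)
  then show False using assms(3) by blast
qed

theorem lemma3p1:
  fixes R :: "('s::finite) reaction set" and S :: "'s vec set"
  assumes "crn_protocol R" and "is_scc R S"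
  shows "(\<exists>c a. is_execution R c a \<and> weakly_fair R c a \<and> (\<forall>t. c t \<in> S))
         \<longleftrightarrow> \<not> (\<exists>\<alpha>\<in>R. escapes R \<alpha> S)"
  using fair_execution_within_scc[OF assms] escape_leaves_fair_execution by blast

end
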